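(* Let $V$ be a real vector space with basis $\{e_1,\dots,e_p,\tilde e_1,\dots,\tilde e_p\}$ and corresponding dual coordinates $(x^1,\dots,x^p,\tilde x^1,\dots,\tilde x^p)$. Define an inner product of signature $(p,p)$ on $V$ by $(e_i,\tilde e_j)=\delta_{ij}$ and $(e_i,e_j)=(\tilde e_i,\tilde e_j)=0$ for all $i,j$. Give $W:=V\oplus\mathbb{R}$ the direct sum inner product (with the standard positive inner product on $\mathbb{R}$), of signature $(p,p+1)$. Let $f(\tilde x^1,\dots,\tilde x^p)$ be a smooth real valued function with $df(0)=0$ and $\det(\partial_{\tilde x^i}\partial_{\tilde x^j}f)(0)\ne0$. Then the embedding $F:=\mathrm{id}\oplus f:V\to W$, $v\mapsto(v,f(\tilde x(v)))$, defines a hypersurface $(M,g)$ of $W$ (with the induced metric) which, sufficiently close to the origin, is a pseudo-Riemannian manifold of signature $(p,p)$ that is spacelike and timelike rank $2$ Jordan IP and whose curvature is nilpotent.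
   Context: Signature $(a,b)$: maximal negative definite subspaces have dimension $a$, maximal positive definite subspaces dimension $b$. Curvature ${}^gR(x,y)=\nabla_x\nabla_y-\nabla_y\nabla_x-\nabla_{[x,y]}$. For a non-degenerate oriented $2$-plane $\pi\subset T_PM$ with oriented basis $\{e_1,e_2\}$, ${}^gR(\pi):=|g(e_1,e_1)g(e_2,e_2)-g(e_1,e_2)^2|^{-1/2}{}^gR(e_1,e_2)$; $\pi$ is spacelike (timelike) if $g|_\pi$ is positive (negative) definite. The manifold is spacelike rank $2$ Jordan IP if at each point $\operatorname{rank}{}^gR(\pi)=2$ for every oriented spacelike $2$-plane and all such operators at a point have the same real Jordan normal form; timelike rank $2$ Jordan IP is defined analogously with timelike $2$-planes. The curvature is nilpotent if ${}^gR_P(x,y)$ is nilpotent for all $P$ and $x,y\in T_PM$. *)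

theory Defs
  imports "HOL-Analysis.Analysis"
begin

definition partial :: "'i::finite \<Rightarrow> (real^'i \<Rightarrow> 'b::real_normed_vector) \<Rightarrow> real^'i \<Rightarrow> 'b" where
  "partial k \<phi> P = frechet_derivative \<phi> (at P) (axis k 1)"

fun iter_partial :: "'i::finite list \<Rightarrow> (real^'i \<Rightarrow> real) \<Rightarrow> real^'i \<Rightarrow> real" where
  "iter_partial [] \<phi> = \<phi>"
| "iter_partial (k # ks) \<phi> = partial k (iter_partial ks \<phi>)"

definition smooth_on :: "(real^'i::finite) set \<Rightarrow> (real^'i \<Rightarrow> real) \<Rightarrow> bool" where
  "smooth_on S \<phi> \<longleftrightarrow> (\<forall>ks. iter_partial ks \<phi> differentiable_on S)"

text \<open>A metric on an open subset of real^'i is given by a family of bilinear forms g P.\<close>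
type_synonym 'i metric = "real^'i \<Rightarrow> real^'i \<Rightarrow> real^'i \<Rightarrow> real"

definition metric_matrix :: "'i::finite metric \<Rightarrow> real^'i \<Rightarrow> real^'i^'i" where
  "metric_matrix g P = (\<chi> a b. g P (axis a 1) (axis b 1))"

text \<open>Christoffel symbols of the Levi-Civita connection:
  christoffel g P k i j = Gamma^k_{ij}, i.e. nabla_{d_i} d_j = sum_k Gamma^k_{ij} d_k.\<close>
definition christoffel :: "'i::finite metric \<Rightarrow> real^'i \<Rightarrow> 'i \<Rightarrow> 'i \<Rightarrow> 'i \<Rightarrow> real" where
  "christoffel g P k i j =
     (1/2) * (\<Sum>l\<in>UNIV. matrix_inv (metric_matrix g P) $ k $ l *
        (partial i (\<lambda>Q. g Q (axis j 1) (axis l 1)) P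
       + partial j (\<lambda>Q. g Q (axis i 1) (axis l 1)) P
       - partial l (\<lambda>Q. g Q (axis i 1) (axis j 1)) P))"

definition cov_deriv :: "'i::finite metric \<Rightarrow> (real^'i \<Rightarrow> real^'i) \<Rightarrow> (real^'i \<Rightarrow> real^'i) \<Rightarrow> real^'i \<Rightarrow> real^'i" where
  "cov_deriv g X Y P = frechet_derivative Y (at P) (X P)
     + (\<chi> k. \<Sum>i\<in>UNIV. \<Sum>j\<in>UNIV. christoffel g P k i j * X P $ i * Y P $ j)"

definition lie_bracket :: "(real^'i::finite \<Rightarrow> real^'i) \<Rightarrow> (real^'i \<Rightarrow> real^'i) \<Rightarrow> real^'i \<Rightarrow> real^'i" where
  "lie_bracket X Y P = frechet_derivative Y (at P) (X P) - frechet_derivative X (at P) (Y P)"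

text \<open>Curvature operator R(x,y) = nabla_x nabla_y - nabla_y nabla_x - nabla_[x,y] at P,
  evaluated on the (coordinate-constant) extensions of the tangent vectors x, y, z.\<close>
definition curvature :: "'i::finite metric \<Rightarrow> real^'i \<Rightarrow> real^'i \<Rightarrow> real^'i \<Rightarrow> real^'i \<Rightarrow> real^'i" where
  "curvature g P x y z =
     (let X = (\<lambda>_. x); Y = (\<lambda>_. y); Z = (\<lambda>_. z) in
        cov_deriv g X (cov_deriv g Y Z) P - cov_deriv g Y (cov_deriv g X Z) P
        - cov_deriv g (lie_bracket X Y) Z P)"

definition neg_index :: "(real^'i::finite \<Rightarrow> real^'i \<Rightarrow> real) \<Rightarrow> nat" where
  "neg_index B = Max {dim S | S. subspace S \<and> (\<forall>v\<in>S. v \<noteq> 0 \<longrightarrow> B v v < 0)}"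

definition pos_index :: "(real^'i::finite \<Rightarrow> real^'i \<Rightarrow> real) \<Rightarrow> nat" where
  "pos_index B = Max {dim S | S. subspace S \<and> (\<forall>v\<in>S. v \<noteq> 0 \<longrightarrow> B v v > 0)}"

definition has_signature :: "(real^'i::finite \<Rightarrow> real^'i \<Rightarrow> real) \<Rightarrow> nat \<Rightarrow> nat \<Rightarrow> bool" where
  "has_signature B a b \<longleftrightarrow> neg_index B = a \<and> pos_index B = b"

definition spacelike_pair :: "'i::finite metric \<Rightarrow> real^'i \<Rightarrow> real^'i \<Rightarrow> real^'i \<Rightarrow> bool" where
  "spacelike_pair g P e1 e2 \<longleftrightarrow> independent {e1, e2} \<and> e1 \<noteq> e2 \<and>
     (\<forall>v\<in>span {e1, e2}. v \<noteq> 0 \<longrightarrow> g P v v > 0)"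

definition timelike_pair :: "'i::finite metric \<Rightarrow> real^'i \<Rightarrow> real^'i \<Rightarrow> real^'i \<Rightarrow> bool" where
  "timelike_pair g P e1 e2 \<longleftrightarrow> independent {e1, e2} \<and> e1 \<noteq> e2 \<and>
     (\<forall>v\<in>span {e1, e2}. v \<noteq> 0 \<longrightarrow> g P v v < 0)"

definition plane_curv :: "'i::finite metric \<Rightarrow> real^'i \<Rightarrow> real^'i \<Rightarrow> real^'i \<Rightarrow> real^'i \<Rightarrow> real^'i" where
  "plane_curv g P e1 e2 =
     (\<lambda>z. (1 / sqrt \<bar>g P e1 e1 * g P e2 e2 - (g P e1 e2)^2\<bar>) *\<^sub>R curvature g P e1 e2 z)"

text \<open>Two linear endomorphisms have the same real Jordan normal form iff they are similar.\<close>
definition same_jordan_form :: "(real^'i::finite \<Rightarrow> real^'i) \<Rightarrow> (real^'i \<Rightarrow> real^'i) \<Rightarrow> bool" where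
  "same_jordan_form A B \<longleftrightarrow> (\<exists>T. linear T \<and> bij T \<and> A \<circ> T = T \<circ> B)"

definition spacelike_rank2_JIP_at :: "'i::finite metric \<Rightarrow> real^'i \<Rightarrow> bool" where
  "spacelike_rank2_JIP_at g P \<longleftrightarrow>
     (\<forall>e1 e2. spacelike_pair g P e1 e2 \<longrightarrow> dim (range (plane_curv g P e1 e2)) = 2) \<and>
     (\<forall>e1 e2 f1 f2. spacelike_pair g P e1 e2 \<longrightarrow> spacelike_pair g P f1 f2 \<longrightarrow>
        same_jordan_form (plane_curv g P e1 e2) (plane_curv g P f1 f2))"

definition timelike_rank2_JIP_at :: "'i::finite metric \<Rightarrow> real^'i \<Rightarrow> bool" where
  "timelike_rank2_JIP_at g P \<longleftrightarrow>
     (\<forall>e1 e2. timelike_pair g P e1 e2 \<longrightarrow> dim (range (plane_curv g P e1 e2)) = 2) \<and>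
     (\<forall>e1 e2 f1 f2. timelike_pair g P e1 e2 \<longrightarrow> timelike_pair g P f1 f2 \<longrightarrow>
        same_jordan_form (plane_curv g P e1 e2) (plane_curv g P f1 f2))"

definition nilpotent_curvature_at :: "'i::finite metric \<Rightarrow> real^'i \<Rightarrow> bool" where
  "nilpotent_curvature_at g P \<longleftrightarrow> (\<forall>x y. \<exists>k. (curvature g P x y ^^ k) = (\<lambda>_. 0))"

text \<open>Coordinates of V are indexed by 'n + 'n: Inl i is x^i (basis e_i), Inr i is x~^i (basis e~_i).\<close>
definition V_inner :: "real^('n::finite + 'n) \<Rightarrow> real^('n + 'n) \<Rightarrow> real" where
  "V_inner u v = (\<Sum>i\<in>UNIV. u $ Inl i * v $ Inr i + u $ Inr i * v $ Inl i)"

definition W_inner :: "(real^('n::finite + 'n)) \<times> real \<Rightarrow> (real^('n + 'n)) \<times> real \<Rightarrow> real" where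
  "W_inner w w' = V_inner (fst w) (fst w') + snd w * snd w'"

definition xtilde :: "real^('n::finite + 'n) \<Rightarrow> real^'n" where
  "xtilde v = (\<chi> i. v $ Inr i)"

definition graph_embedding :: "(real^'n::finite \<Rightarrow> real) \<Rightarrow> real^('n + 'n) \<Rightarrow> (real^('n + 'n)) \<times> real" where
  "graph_embedding f v = (v, f (xtilde v))"

definition induced_metric :: "(real^'n::finite \<Rightarrow> real) \<Rightarrow> ('n + 'n) metric" where
  "induced_metric f P u v =
     W_inner (frechet_derivative (graph_embedding f) (at P) u)
             (frechet_derivative (graph_embedding f) (at P) v)"

end

theory Submission
  imports Defs "HOL-Library.Quadratic_Discriminant"
begin

(* Write v = (x, x~) and let h and H be the gradient and the Hessian of f at x~. The metric induced
   by the graph is g(u, v) = x(u) . x~(v) + x~(u) . x(v) + (h . x~(u)) (h . x~(v)); it depends on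
   x~ only, and its Christoffel map is Gamma(y, z) = (H y~ . z~) (h, 0), which takes values in the
   x-directions and vanishes on them. Hence R(x, y) z = ((H y~ . z~) H x~ - (H x~ . z~) H y~, 0), the
   third derivatives of f cancelling by symmetry, and R(x, y)^2 = 0.
   The x-directions are totally isotropic, so x~ is injective on definite subspaces; this bounds both
   indices by p, and the graphs of w -> c w with c = 1 and c = -(|h|^2 + 1) attain the bound. On a
   definite plane with basis e1, e2 the vectors u_i = H e_i~ are independent wherever det H <> 0,
   and R(pi) z = c ((u2 . z~) u1 - (u1 . z~) u2, 0) with c > 0: an operator of rank 2, and any two
   of them are conjugate by a map (x, x~) -> (M x, N x~). *)

definition independent_pair :: "'a::real_vector \<Rightarrow> 'a \<Rightarrow> bool" where
  "independent_pair a b \<longleftrightarrow> (\<forall>s t. s *\<^sub>R a + t *\<^sub>R b = 0 \<longrightarrow> s = 0 \<and> t = 0)"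

lemma independent_pair_alt: "independent_pair a b \<longleftrightarrow> b \<noteq> 0 \<and> (\<forall>k. a \<noteq> k *\<^sub>R b)"
proof
  assume ind: "independent_pair a b"
  have "b \<noteq> 0"
    using ind[unfolded independent_pair_def, rule_format, of 0 1] by auto
  moreover have "a \<noteq> k *\<^sub>R b" for k
    using ind[unfolded independent_pair_def, rule_format, of 1 "- k"] by auto
  ultimately show "b \<noteq> 0 \<and> (\<forall>k. a \<noteq> k *\<^sub>R b)"
    by blast
next
  assume b: "b \<noteq> 0 \<and> (\<forall>k. a \<noteq> k *\<^sub>R b)"
  show "independent_pair a b"
    unfolding independent_pair_def
  proof (intro allI impI)
    fix s t
    assume st: "s *\<^sub>R a + t *\<^sub>R b = 0"
    have "s = 0"
    proof (rule ccontr)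
      assume "s \<noteq> 0"
      moreover have "s *\<^sub>R a = - (t *\<^sub>R b)"
        using st by (simp add: eq_neg_iff_add_eq_0)
      then have "(1 / s) *\<^sub>R (s *\<^sub>R a) = (1 / s) *\<^sub>R - (t *\<^sub>R b)"
        by simp
      ultimately have "a = (- t / s) *\<^sub>R b"
        by simp
      then show False
        using b by blast
    qed
    then show "s = 0 \<and> t = 0"
      using st b by simp
  qed
qed

lemma independent_pair_iff_independent:
  "a \<noteq> b \<Longrightarrow> independent {a, b} \<longleftrightarrow> independent_pair a b"
  by (simp add: independent_insert span_singleton independent_pair_alt) blast

lemma independent_pair_neq: "independent_pair a b \<Longrightarrow> a \<noteq> b"
  unfolding independent_pair_def by (metis add.right_inverse scaleR_minus_left scaleR_one zero_neq_one)

lemma independent_pair_commute: "independent_pair a b \<Longrightarrow> independent_pair b a"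
  unfolding independent_pair_def by (metis add.commute)

lemma independent_pair_uminus_right: "independent_pair a b \<Longrightarrow> independent_pair a (- b)"
  unfolding independent_pair_def by (metis neg_0_equal_iff_equal scaleR_minus_left scaleR_minus_right)

lemma independent_pair_scaleR: "independent_pair a b \<Longrightarrow> c \<noteq> 0 \<Longrightarrow> independent_pair (c *\<^sub>R a) (c *\<^sub>R b)"
  unfolding independent_pair_def by (metis mult_eq_0_iff scaleR_scaleR)

lemma independent_pair_linear_image:
  assumes "linear L" "inj L" "independent_pair a b"
  shows "independent_pair (L a) (L b)"
  unfolding independent_pair_def
proof (intro allI impI)
  fix s t
  assume "s *\<^sub>R L a + t *\<^sub>R L b = 0"
  then have "L (s *\<^sub>R a + t *\<^sub>R b) = L 0"
    using assms(1) by (simp add: linear_add linear_scale linear_0)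
  then show "s = 0 \<and> t = 0"
    using assms(2,3) unfolding independent_pair_def by (meson injD)
qed

lemma linear_bij_map_independent_pair:
  fixes a b c d :: "real^'n::finite"
  assumes "independent_pair a b" "independent_pair c d"
  obtains M where "linear M" "bij M" "M a = c" "M b = d"
proof -
  have ab: "a \<noteq> b" and cd: "c \<noteq> d"
    using assms independent_pair_neq by blast+
  define F where "F x = (if x = a then c else d)" for x
  have "F ` {a, b} = {c, d}" "inj_on F {a, b}"
    using ab cd by (auto simp: F_def inj_on_def)
  moreover have "independent {a, b}" "independent {c, d}"
    using assms ab cd independent_pair_iff_independent by blast+
  ultimately obtain M where M: "linear M" "inj M" "\<forall>x\<in>{a, b}. M x = F x"
    using linear_independent_extend_inj[of "{a, b}" F] by metis
  then have "bij M"
    using linear_inj_imp_surj bij_def by blast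
  then show ?thesis
    using that M ab by (simp add: F_def)
qed

definition anisotropic_pair :: "('a::real_vector \<Rightarrow> 'a \<Rightarrow> real) \<Rightarrow> 'a \<Rightarrow> 'a \<Rightarrow> bool" where
  "anisotropic_pair B e1 e2 \<longleftrightarrow>
     (\<forall>s t. (s, t) \<noteq> (0, 0) \<longrightarrow> B (s *\<^sub>R e1 + t *\<^sub>R e2) (s *\<^sub>R e1 + t *\<^sub>R e2) \<noteq> 0)"

lemma bilinear_diagonal_pair:
  assumes "bilinear B" "\<And>x y. B x y = B y x"
  shows "B (s *\<^sub>R e1 + t *\<^sub>R e2) (s *\<^sub>R e1 + t *\<^sub>R e2) =
    s\<^sup>2 * B e1 e1 + 2 * s * t * B e1 e2 + t\<^sup>2 * B e2 e2"
  using assms(2)[of e2 e1]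
  by (simp add: bilinear_ladd[OF assms(1)] bilinear_radd[OF assms(1)] bilinear_lmul[OF assms(1)]
      bilinear_rmul[OF assms(1)] power2_eq_square algebra_simps)

text \<open>A nonnegative discriminant would give an isotropic vector x e1 + e2.\<close>

lemma anisotropic_pair_gram_pos:
  assumes B: "bilinear B" "\<And>x y. B x y = B y x" and aniso: "anisotropic_pair B e1 e2"
  shows "B e1 e1 * B e2 e2 - (B e1 e2)\<^sup>2 > 0"
proof (rule ccontr)
  assume "\<not> ?thesis"
  then have "discrim (B e1 e1) (2 * B e1 e2) (B e2 e2) \<ge> 0"
    by (simp add: discrim_def power2_eq_square)
  moreover have "B e1 e1 \<noteq> 0"
    using aniso[unfolded anisotropic_pair_def, rule_format, of 1 0] by simp
  ultimately obtain x where "B e1 e1 * x\<^sup>2 + 2 * B e1 e2 * x + B e2 e2 = 0"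
    using discriminant_nonneg_ex by blast
  then have "B (x *\<^sub>R e1 + 1 *\<^sub>R e2) (x *\<^sub>R e1 + 1 *\<^sub>R e2) = 0"
    unfolding bilinear_diagonal_pair[OF B] by (simp add: algebra_simps)
  then show False
    using aniso[unfolded anisotropic_pair_def, rule_format, of x 1] by simp
qed

lemma anisotropic_pair_if_anisotropic_span:
  assumes "independent {e1, e2}" "e1 \<noteq> e2"
    and "\<forall>v\<in>span {e1, e2}. v \<noteq> 0 \<longrightarrow> B v v \<noteq> 0"
  shows "anisotropic_pair B e1 e2"
  unfolding anisotropic_pair_def
proof (intro allI impI)
  fix s t :: real
  assume "(s, t) \<noteq> (0, 0)"
  then have "s *\<^sub>R e1 + t *\<^sub>R e2 \<noteq> 0"
    using assms(1,2) independent_pair_iff_independent unfolding independent_pair_def by blast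
  moreover have "s *\<^sub>R e1 + t *\<^sub>R e2 \<in> span {e1, e2}"
    by (intro span_add span_scale span_base) auto
  ultimately show "B (s *\<^sub>R e1 + t *\<^sub>R e2) (s *\<^sub>R e1 + t *\<^sub>R e2) \<noteq> 0"
    using assms(3) by blast
qed

lemma independent_pair_gram_pos:
  fixes w1 w2 :: "'a::euclidean_space"
  assumes "independent_pair w1 w2"
  shows "(w1 \<bullet> w1) * (w2 \<bullet> w2) - (w1 \<bullet> w2)\<^sup>2 > 0"
proof (rule anisotropic_pair_gram_pos)
  show "bilinear ((\<bullet>) :: 'a \<Rightarrow> 'a \<Rightarrow> real)"
    by (simp add: bilinear_conv_bounded_bilinear bounded_bilinear_inner)
  show "anisotropic_pair (\<bullet>) w1 w2"
    using assms unfolding anisotropic_pair_def independent_pair_def by auto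
qed (simp add: inner_commute)

lemma independent_pair_dual:
  fixes w1 w2 :: "'a::euclidean_space"
  assumes "independent_pair w1 w2"
  obtains z1 z2 where "w1 \<bullet> z1 = 1" "w2 \<bullet> z1 = 0" "w1 \<bullet> z2 = 0" "w2 \<bullet> z2 = 1"
proof
  define d where "d = (w1 \<bullet> w1) * (w2 \<bullet> w2) - (w1 \<bullet> w2)\<^sup>2"
  have "d \<noteq> 0"
    using independent_pair_gram_pos[OF assms] by (simp add: d_def)
  define z1 where "z1 = (1 / d) *\<^sub>R ((w2 \<bullet> w2) *\<^sub>R w1 - (w1 \<bullet> w2) *\<^sub>R w2)"
  define z2 where "z2 = (1 / d) *\<^sub>R ((w1 \<bullet> w1) *\<^sub>R w2 - (w1 \<bullet> w2) *\<^sub>R w1)"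
  show "w1 \<bullet> z1 = 1" "w2 \<bullet> z1 = 0" "w1 \<bullet> z2 = 0" "w2 \<bullet> z2 = 1"
    using \<open>d \<noteq> 0\<close> unfolding z1_def z2_def
    by (simp_all add: d_def inner_diff_right inner_commute power2_eq_square mult.commute)
qed

lemma sum_UNIV_Plus:
  "(\<Sum>a\<in>(UNIV::('a::finite + 'b::finite) set). F a) = (\<Sum>i\<in>UNIV. F (Inl i)) + (\<Sum>i\<in>UNIV. F (Inr i))"
  using sum.Plus[of "UNIV::'a set" "UNIV::'b set" F] by (simp add: comp_def)

lemma axis_nth_if: "axis j x $ i = (if i = j then x else 0)"
  by (simp add: axis_def)

lemma if_one_zero_mult:
  "(if P then 1 else 0) * x = (if P then x else (0::'a::semiring_1))"
  "x * (if P then 1 else 0) = (if P then x else (0::'a::semiring_1))"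
  by simp_all

lemma matrix_inv_unique:
  fixes A B :: "'a::semiring_1^'m::finite^'m"
  assumes AB: "A ** B = mat 1" and BA: "B ** A = mat 1"
  shows "matrix_inv A = B"
proof -
  have "matrix_inv A ** A = mat 1"
    using someI_ex[of "\<lambda>A'. A ** A' = mat 1 \<and> A' ** A = mat 1"] AB BA
    unfolding matrix_inv_def by blast
  then have "matrix_inv A ** (A ** B) = B"
    by (simp add: matrix_mul_assoc)
  then show ?thesis
    using AB by simp
qed

section \<open>Partial derivatives and the symmetry of mixed partials\<close>

lemma frechet_derivative_cong_open:
  assumes "open T" "x \<in> T" "\<And>y. y \<in> T \<Longrightarrow> \<phi> y = \<psi> y"
  shows "frechet_derivative \<phi> (at x) = frechet_derivative \<psi> (at x)"
proof -
  have "(\<phi> has_derivative D) (at x) \<longleftrightarrow> (\<psi> has_derivative D) (at x)" for D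
    using assms has_derivative_transform_within_open[of \<phi> D x UNIV T \<psi>]
      has_derivative_transform_within_open[of \<psi> D x UNIV T \<phi>] by auto
  then show ?thesis
    unfolding frechet_derivative_def by simp
qed

lemma partial_cong_open:
  assumes "open T" "x \<in> T" "\<And>y. y \<in> T \<Longrightarrow> \<phi> y = \<psi> y"
  shows "partial k \<phi> x = partial k \<psi> x"
  unfolding partial_def using frechet_derivative_cong_open[OF assms] by simp

lemma partial_eq_derivative:
  assumes "(\<phi> has_derivative D) (at q)"
  shows "partial k \<phi> q = D (axis k 1)"
  unfolding partial_def using frechet_derivative_at[OF assms] by simp

lemma linear_eq_sum_axis:
  fixes L :: "real^'n::finite \<Rightarrow> real"
  assumes "linear L"
  shows "L w = (\<Sum>k\<in>UNIV. w $ k * L (axis k 1))"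
proof -
  have "L w = L (\<Sum>k\<in>UNIV. w $ k *\<^sub>R axis k 1)"
    using basis_expansion[of w] by (simp add: scalar_mult_eq_scaleR)
  also have "\<dots> = (\<Sum>k\<in>UNIV. w $ k * L (axis k 1))"
    using assms by (simp add: linear_sum linear_scale)
  finally show ?thesis .
qed

lemma has_derivative_partials:
  fixes \<phi> :: "real^'n::finite \<Rightarrow> real"
  assumes "\<phi> differentiable at q"
  shows "(\<phi> has_derivative (\<lambda>w. \<Sum>k\<in>UNIV. w $ k * partial k \<phi> q)) (at q)"
proof -
  have "linear (frechet_derivative \<phi> (at q))"
    using assms linear_frechet_derivative by blast
  then have "frechet_derivative \<phi> (at q) = (\<lambda>w. \<Sum>k\<in>UNIV. w $ k * partial k \<phi> q)"
    unfolding partial_def by (intro ext linear_eq_sum_axis)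
  with assms show ?thesis
    using frechet_derivative_works by metis
qed

lemma has_derivative_vec_componentwise:
  fixes F :: "'a::real_normed_vector \<Rightarrow> real^'m::finite"
  assumes "\<And>k. ((\<lambda>x. F x $ k) has_derivative (\<lambda>h. F' h $ k)) (at a within T)"
  shows "(F has_derivative F') (at a within T)"
proof (subst has_derivative_componentwise_within, intro ballI)
  fix b :: "real^'m"
  assume "b \<in> Basis"
  then obtain k where "b = axis k 1"
    unfolding Basis_vec_def by auto
  then show "((\<lambda>x. F x \<bullet> b) has_derivative (\<lambda>x. F' x \<bullet> b)) (at a within T)"
    using assms[of k] by (simp add: inner_axis)
qed

lemma has_derivative_along_axis:
  fixes \<phi> :: "real^'n::finite \<Rightarrow> real"
  assumes "\<phi> differentiable at (a + s *\<^sub>R axis i 1)"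
  shows "((\<lambda>s. \<phi> (a + s *\<^sub>R axis i 1)) has_derivative
           (\<lambda>h. h * partial i \<phi> (a + s *\<^sub>R axis i 1))) (at s within X)"
proof -
  have "((\<lambda>s. a + s *\<^sub>R axis i 1) has_derivative (\<lambda>h. h *\<^sub>R axis i 1)) (at s within X)"
    by (auto intro!: derivative_eq_intros)
  from has_derivative_compose[OF this frechet_derivative_works[THEN iffD1, OF assms]]
  moreover have "linear (frechet_derivative \<phi> (at (a + s *\<^sub>R axis i 1)))"
    using assms linear_frechet_derivative by blast
  ultimately show ?thesis
    by (simp add: linear_scale partial_def)
qed

lemma mean_value_along_axis:
  fixes \<phi> :: "real^'n::finite \<Rightarrow> real"
  assumes "0 < t" and diff: "\<And>s. 0 \<le> s \<Longrightarrow> s \<le> t \<Longrightarrow> \<phi> differentiable at (a + s *\<^sub>R axis i 1)"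
  obtains \<sigma> where "0 \<le> \<sigma>" "\<sigma> \<le> t"
    "\<phi> (a + t *\<^sub>R axis i 1) - \<phi> a = t * partial i \<phi> (a + \<sigma> *\<^sub>R axis i 1)"
proof -
  have "((\<lambda>s. \<phi> (a + s *\<^sub>R axis i 1)) has_derivative (\<lambda>h. h * partial i \<phi> (a + s *\<^sub>R axis i 1)))
      (at s within {0..t})" if "0 \<le> s" "s \<le> t" for s
    using has_derivative_along_axis diff[OF that] by blast
  from mvt_very_simple[OF _ this] obtain \<sigma> where "\<sigma> \<in> {0..t}"
    "\<phi> (a + t *\<^sub>R axis i 1) - \<phi> (a + 0 *\<^sub>R axis i 1) = (t - 0) * partial i \<phi> (a + \<sigma> *\<^sub>R axis i 1)"
    using assms(1) by fastforce
  then show ?thesis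
    by (intro that[of \<sigma>]) auto
qed

lemma mean_value_along_axis_diff:
  fixes \<phi> :: "real^'n::finite \<Rightarrow> real"
  assumes "0 < t"
    and diff: "\<And>s. 0 \<le> s \<Longrightarrow> s \<le> t \<Longrightarrow>
      \<phi> differentiable at (a + s *\<^sub>R axis i 1) \<and> \<phi> differentiable at (b + s *\<^sub>R axis i 1)"
  obtains \<sigma> where "0 \<le> \<sigma>" "\<sigma> \<le> t"
    "\<phi> (b + t *\<^sub>R axis i 1) - \<phi> (a + t *\<^sub>R axis i 1) - (\<phi> b - \<phi> a) =
       t * (partial i \<phi> (b + \<sigma> *\<^sub>R axis i 1) - partial i \<phi> (a + \<sigma> *\<^sub>R axis i 1))"
proof -
  define \<psi> where "\<psi> s = \<phi> (b + s *\<^sub>R axis i 1) - \<phi> (a + s *\<^sub>R axis i 1)" for s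
  have "(\<psi> has_derivative (\<lambda>h. h * (partial i \<phi> (b + s *\<^sub>R axis i 1) - partial i \<phi> (a + s *\<^sub>R axis i 1))))
      (at s within {0..t})" if "0 \<le> s" "s \<le> t" for s
  proof -
    have "\<phi> differentiable at (b + s *\<^sub>R axis i 1)" "\<phi> differentiable at (a + s *\<^sub>R axis i 1)"
      using diff[OF that] by auto
    from has_derivative_diff[OF has_derivative_along_axis[OF this(1)] has_derivative_along_axis[OF this(2)]]
    show ?thesis
      unfolding \<psi>_def by (simp add: right_diff_distrib)
  qed
  from mvt_very_simple[OF _ this] obtain \<sigma> where "\<sigma> \<in> {0..t}"
    "\<psi> t - \<psi> 0 = (t - 0) * (partial i \<phi> (b + \<sigma> *\<^sub>R axis i 1) - partial i \<phi> (a + \<sigma> *\<^sub>R axis i 1))"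
    using assms(1) by fastforce
  then show ?thesis
    unfolding \<psi>_def by (intro that[of \<sigma>]) auto
qed

lemma second_difference_mean_value:
  fixes \<phi> :: "real^'n::finite \<Rightarrow> real"
  assumes S: "open S" "cball q (2 * t) \<subseteq> S" and t: "0 < t"
    and d0: "\<phi> differentiable_on S" and di: "partial i \<phi> differentiable_on S"
  shows "\<exists>\<xi>\<in>cball q (2 * t). \<phi> (q + t *\<^sub>R axis i 1 + t *\<^sub>R axis j 1) - \<phi> (q + t *\<^sub>R axis i 1)
      - \<phi> (q + t *\<^sub>R axis j 1) + \<phi> q = t\<^sup>2 * partial j (partial i \<phi>) \<xi>"
proof -
  let ?ei = "axis i 1 :: real^'n" and ?ej = "axis j 1 :: real^'n"
  have near: "q + s *\<^sub>R ?ei + r *\<^sub>R ?ej \<in> cball q (2 * t)"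
    if "0 \<le> s" "s \<le> t" "0 \<le> r" "r \<le> t" for s r
  proof -
    have "dist q (q + s *\<^sub>R ?ei + r *\<^sub>R ?ej) = norm (s *\<^sub>R ?ei + r *\<^sub>R ?ej)"
      by (simp add: dist_norm norm_minus_commute add.assoc add.commute)
    also have "\<dots> \<le> norm (s *\<^sub>R ?ei) + norm (r *\<^sub>R ?ej)"
      by (rule norm_triangle_ineq)
    finally show ?thesis
      using that by simp
  qed
  have diff: "\<psi> differentiable at (q + s *\<^sub>R ?ei + r *\<^sub>R ?ej)"
    if "\<psi> differentiable_on S" "0 \<le> s" "s \<le> t" "0 \<le> r" "r \<le> t" for \<psi> s r
    using near[OF that(2-)] that(1) S differentiable_on_eq_differentiable_at by blast
  have "\<phi> differentiable at (q + s *\<^sub>R ?ei) \<and> \<phi> differentiable at (q + t *\<^sub>R ?ej + s *\<^sub>R ?ei)"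
    if "0 \<le> s" "s \<le> t" for s
    using diff[OF d0 that, of 0] diff[OF d0 that, of t] t by (simp add: add_ac)
  then obtain \<sigma> where \<sigma>: "0 \<le> \<sigma>" "\<sigma> \<le> t"
    "\<phi> (q + t *\<^sub>R ?ej + t *\<^sub>R ?ei) - \<phi> (q + t *\<^sub>R ?ei) - (\<phi> (q + t *\<^sub>R ?ej) - \<phi> q) =
       t * (partial i \<phi> (q + t *\<^sub>R ?ej + \<sigma> *\<^sub>R ?ei) - partial i \<phi> (q + \<sigma> *\<^sub>R ?ei))"
    using mean_value_along_axis_diff[OF t, of \<phi> q i "q + t *\<^sub>R ?ej"] by blast
  obtain \<tau> where \<tau>: "0 \<le> \<tau>" "\<tau> \<le> t"
    "partial i \<phi> (q + \<sigma> *\<^sub>R ?ei + t *\<^sub>R ?ej) - partial i \<phi> (q + \<sigma> *\<^sub>R ?ei) =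
       t * partial j (partial i \<phi>) (q + \<sigma> *\<^sub>R ?ei + \<tau> *\<^sub>R ?ej)"
    using mean_value_along_axis[OF t, of "partial i \<phi>" "q + \<sigma> *\<^sub>R ?ei" j] diff[OF di \<sigma>(1,2)] by blast
  have "\<phi> (q + t *\<^sub>R ?ei + t *\<^sub>R ?ej) - \<phi> (q + t *\<^sub>R ?ei) - \<phi> (q + t *\<^sub>R ?ej) + \<phi> q =
      t\<^sup>2 * partial j (partial i \<phi>) (q + \<sigma> *\<^sub>R ?ei + \<tau> *\<^sub>R ?ej)"
    using \<sigma>(3) \<tau>(3) by (simp add: add_ac power2_eq_square)
  then show ?thesis
    using near[OF \<sigma>(1,2) \<tau>(1,2)] by blast
qed

lemma partial_commute:
  fixes \<phi> :: "real^'n::finite \<Rightarrow> real"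
  assumes S: "open S" "q \<in> S"
    and d0: "\<phi> differentiable_on S"
    and di: "partial i \<phi> differentiable_on S" and dj: "partial j \<phi> differentiable_on S"
    and ci: "continuous_on S (partial j (partial i \<phi>))"
    and cj: "continuous_on S (partial i (partial j \<phi>))"
  shows "partial i (partial j \<phi>) q = partial j (partial i \<phi>) q"
proof (rule ccontr)
  let ?F = "partial j (partial i \<phi>)" and ?G = "partial i (partial j \<phi>)"
  assume ne: "?G q \<noteq> ?F q"
  define e where "e = \<bar>?G q - ?F q\<bar> / 2"
  have e: "e > 0"
    using ne by (simp add: e_def)
  have "continuous (at q) ?F" "continuous (at q) ?G"
    using ci cj S continuous_on_eq_continuous_at by blast+
  then obtain d1 d2 where d1: "d1 > 0" "\<And>y. dist y q < d1 \<Longrightarrow> dist (?F y) (?F q) < e"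
    and d2: "d2 > 0" "\<And>y. dist y q < d2 \<Longrightarrow> dist (?G y) (?G q) < e"
    using e unfolding continuous_at_eps_delta by blast
  obtain r where r: "r > 0" "ball q r \<subseteq> S"
    using S openE by blast
  define t where "t = min (min d1 d2) r / 4"
  have t: "t > 0" "2 * t < d1" "2 * t < d2" "2 * t < r"
    using d1 d2 r by (auto simp: t_def)
  then have cb: "cball q (2 * t) \<subseteq> S"
    using r(2) cball_subset_ball_iff[of q "2 * t" q r] by auto
  obtain \<xi> where \<xi>: "\<xi> \<in> cball q (2 * t)" "\<phi> (q + t *\<^sub>R axis i 1 + t *\<^sub>R axis j 1) - \<phi> (q + t *\<^sub>R axis i 1)
      - \<phi> (q + t *\<^sub>R axis j 1) + \<phi> q = t\<^sup>2 * ?F \<xi>"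
    using second_difference_mean_value[OF S(1) cb t(1) d0 di] by blast
  obtain \<eta> where \<eta>: "\<eta> \<in> cball q (2 * t)" "\<phi> (q + t *\<^sub>R axis j 1 + t *\<^sub>R axis i 1) - \<phi> (q + t *\<^sub>R axis j 1)
      - \<phi> (q + t *\<^sub>R axis i 1) + \<phi> q = t\<^sup>2 * ?G \<eta>"
    using second_difference_mean_value[OF S(1) cb t(1) d0 dj, of i] by blast
  have swap: "q + t *\<^sub>R axis j 1 + t *\<^sub>R axis i 1 = q + t *\<^sub>R axis i 1 + t *\<^sub>R axis j 1"
    by (simp add: add_ac)
  have "t\<^sup>2 * ?F \<xi> = t\<^sup>2 * ?G \<eta>"
    using \<xi>(2) \<eta>(2) unfolding swap by linarith
  then have "?F \<xi> = ?G \<eta>"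
    using t(1) by simp
  moreover have "dist (?F \<xi>) (?F q) < e" "dist (?G \<eta>) (?G q) < e"
    using \<xi>(1) \<eta>(1) t d1 d2 by (auto simp: dist_commute)
  ultimately have "\<bar>?G q - ?F q\<bar> < 2 * e"
    by (simp add: dist_real_def)
  then show False
    by (simp add: e_def)
qed

definition gradient :: "(real^'n::finite \<Rightarrow> real) \<Rightarrow> real^'n \<Rightarrow> real^'n" where
  "gradient f q = (\<chi> k. partial k f q)"

definition hessian :: "(real^'n::finite \<Rightarrow> real) \<Rightarrow> real^'n \<Rightarrow> real^'n^'n" where
  "hessian f q = (\<chi> k l. partial k (partial l f) q)"

definition third_derivative ::
    "(real^'n::finite \<Rightarrow> real) \<Rightarrow> real^'n \<Rightarrow> real^'n \<Rightarrow> real^'n \<Rightarrow> real^'n \<Rightarrow> real" where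
  "third_derivative f q x y z =
     (\<Sum>k\<in>UNIV. \<Sum>l\<in>UNIV. (\<Sum>m\<in>UNIV. z $ m * partial m (partial k (partial l f)) q) * x $ l * y $ k)"

locale smooth_function =
  fixes f :: "real^'n::finite \<Rightarrow> real" and S :: "(real^'n) set"
  assumes open_domain: "open S" and smooth: "smooth_on S f"
begin

lemma differentiable_on_partial0: "f differentiable_on S"
  and differentiable_on_partial1: "partial k f differentiable_on S"
  and differentiable_on_partial2: "partial k (partial l f) differentiable_on S"
  and differentiable_on_partial3: "partial m (partial k (partial l f)) differentiable_on S"
  using smooth iter_partial.simps unfolding smooth_on_def by metis+

lemma continuous_on_partial2: "continuous_on S (partial k (partial l f))"
  and continuous_on_partial3: "continuous_on S (partial m (partial k (partial l f)))"
  using differentiable_on_partial2 differentiable_on_partial3 differentiable_imp_continuous_on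
  by blast+

lemma differentiable_on_imp_at:
  "q \<in> S \<Longrightarrow> \<psi> differentiable_on S \<Longrightarrow> \<psi> differentiable at q"
  using open_domain differentiable_on_eq_differentiable_at by blast

lemma partial2_commute: "q \<in> S \<Longrightarrow> partial k (partial l f) q = partial l (partial k f) q"
  using partial_commute[OF open_domain _ differentiable_on_partial0 differentiable_on_partial1
      differentiable_on_partial1 continuous_on_partial2 continuous_on_partial2] by blast

lemma partial3_commute:
  assumes q: "q \<in> S"
  shows "partial m (partial k (partial l f)) q = partial l (partial k (partial m f)) q"
proof -
  have "partial m (partial k (partial l f)) q = partial m (partial l (partial k f)) q"
    by (rule partial_cong_open[OF open_domain q]) (simp add: partial2_commute)
  also have "\<dots> = partial l (partial m (partial k f)) q"
    using partial_commute[OF open_domain q differentiable_on_partial1 differentiable_on_partial2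
        differentiable_on_partial2 continuous_on_partial3 continuous_on_partial3] by blast
  also have "\<dots> = partial l (partial k (partial m f)) q"
    by (rule partial_cong_open[OF open_domain q]) (simp add: partial2_commute)
  finally show ?thesis .
qed

lemma hessian_symmetric: "q \<in> S \<Longrightarrow> (hessian f q *v x) \<bullet> y = (hessian f q *v y) \<bullet> x"
proof -
  assume q: "q \<in> S"
  have "(hessian f q *v x) \<bullet> y = (\<Sum>k\<in>UNIV. \<Sum>l\<in>UNIV. partial k (partial l f) q * x $ l * y $ k)"
    by (simp add: inner_vec_def matrix_vector_mult_def hessian_def sum_distrib_right)
  also have "\<dots> = (\<Sum>k\<in>UNIV. \<Sum>l\<in>UNIV. partial l (partial k f) q * x $ k * y $ l)"
    by (rule sum.swap)
  also have "\<dots> = (\<Sum>k\<in>UNIV. \<Sum>l\<in>UNIV. partial k (partial l f) q * x $ k * y $ l)"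
    using partial2_commute[OF q] by (intro sum.cong refl) metis
  also have "\<dots> = (hessian f q *v y) \<bullet> x"
    by (simp add: inner_vec_def matrix_vector_mult_def hessian_def sum_distrib_left mult_ac)
  finally show ?thesis .
qed

lemma has_derivative_gradient_inner: "q \<in> S \<Longrightarrow> (f has_derivative (\<lambda>w. gradient f q \<bullet> w)) (at q)"
  using has_derivative_partials[OF differentiable_on_imp_at[OF _ differentiable_on_partial0]]
  by (simp add: inner_vec_def gradient_def mult_ac)

lemma has_derivative_gradient: "q \<in> S \<Longrightarrow> (gradient f has_derivative (\<lambda>w. hessian f q *v w)) (at q)"
proof (rule has_derivative_vec_componentwise)
  fix k
  assume q: "q \<in> S"
  have "(partial k f has_derivative (\<lambda>w. \<Sum>l\<in>UNIV. w $ l * partial l (partial k f) q)) (at q)"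
    using has_derivative_partials differentiable_on_imp_at[OF q differentiable_on_partial1]
    by blast
  moreover have "(\<lambda>w. \<Sum>l\<in>UNIV. w $ l * partial l (partial k f) q) = (\<lambda>w. (hessian f q *v w) $ k)"
    using partial2_commute[OF q] by (simp add: matrix_vector_mult_def hessian_def mult_ac)
  ultimately show "((\<lambda>x. gradient f x $ k) has_derivative (\<lambda>h. (hessian f q *v h) $ k)) (at q)"
    by (simp add: gradient_def)
qed

lemma has_derivative_hessian_form:
  assumes q: "q \<in> S"
  shows "((\<lambda>q. (hessian f q *v x) \<bullet> y) has_derivative third_derivative f q x y) (at q)"
proof -
  have "(\<lambda>q. (hessian f q *v x) \<bullet> y) = (\<lambda>q. \<Sum>k\<in>UNIV. \<Sum>l\<in>UNIV. partial k (partial l f) q * x $ l * y $ k)"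
    by (simp add: inner_vec_def matrix_vector_mult_def hessian_def sum_distrib_left mult_ac)
  moreover have "(partial k (partial l f) has_derivative
      (\<lambda>z. \<Sum>m\<in>UNIV. z $ m * partial m (partial k (partial l f)) q)) (at q)" for k l
    using has_derivative_partials differentiable_on_imp_at[OF q differentiable_on_partial2]
    by blast
  ultimately show ?thesis
    unfolding third_derivative_def[abs_def]
    by (auto intro!: has_derivative_sum has_derivative_mult_left)
qed

lemma third_derivative_swap:
  assumes q: "q \<in> S"
  shows "third_derivative f q x y z = third_derivative f q z y x"
proof -
  let ?T = "\<lambda>m k l. partial m (partial k (partial l f)) q"
  have swap: "(\<Sum>l\<in>UNIV. \<Sum>m\<in>UNIV. z $ m * ?T m k l * x $ l) = (\<Sum>l\<in>UNIV. \<Sum>m\<in>UNIV. x $ m * ?T m k l * z $ l)"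
    for k
  proof -
    have "(\<Sum>l\<in>UNIV. \<Sum>m\<in>UNIV. z $ m * ?T m k l * x $ l) = (\<Sum>l\<in>UNIV. \<Sum>m\<in>UNIV. z $ l * ?T l k m * x $ m)"
      by (rule sum.swap)
    also have "\<dots> = (\<Sum>l\<in>UNIV. \<Sum>m\<in>UNIV. x $ m * ?T m k l * z $ l)"
      using partial3_commute[OF q] by (intro sum.cong refl) (simp add: mult_ac)
    finally show ?thesis .
  qed
  have "third_derivative f q x y z = (\<Sum>k\<in>UNIV. (\<Sum>l\<in>UNIV. \<Sum>m\<in>UNIV. z $ m * ?T m k l * x $ l) * y $ k)"
    unfolding third_derivative_def by (simp add: sum_distrib_right)
  also have "\<dots> = third_derivative f q z y x"
    unfolding swap third_derivative_def by (simp add: sum_distrib_right)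
  finally show ?thesis .
qed

end

definition xpart :: "real^('n::finite + 'n) \<Rightarrow> real^'n" where
  "xpart v = (\<chi> i. v $ Inl i)"

definition vpair :: "real^'n::finite \<Rightarrow> real^'n \<Rightarrow> real^('n + 'n)" where
  "vpair x y = (\<chi> a. case a of Inl i \<Rightarrow> x $ i | Inr i \<Rightarrow> y $ i)"

lemma xpart_vpair [simp]: "xpart (vpair x y) = x"
  and xtilde_vpair [simp]: "xtilde (vpair x y) = y"
  by (simp_all add: xpart_def xtilde_def vpair_def vec_eq_iff)

lemma vpair_xpart_xtilde: "vpair (xpart v) (xtilde v) = v"
  by (simp add: xtilde_def xpart_def vpair_def vec_eq_iff split: sum.split)

lemma vpair_eq_iff [simp]: "vpair a b = vpair c d \<longleftrightarrow> a = c \<and> b = d"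
  by (metis xpart_vpair xtilde_vpair)

lemma vpair_add: "vpair a c + vpair b d = vpair (a + b) (c + d)"
  and vpair_diff: "vpair a c - vpair b d = vpair (a - b) (c - d)"
  and vpair_scaleR: "r *\<^sub>R vpair a b = vpair (r *\<^sub>R a) (r *\<^sub>R b)"
  by (simp_all add: vpair_def vec_eq_iff split: sum.split)

lemma vpair_eq_0_iff [simp]: "vpair a b = 0 \<longleftrightarrow> a = 0 \<and> b = 0"
  by (simp add: vpair_def vec_eq_iff split: sum.split) (metis sum.simps(5,6))

lemma vpair_nth [simp]: "vpair x y $ Inl i = x $ i" "vpair x y $ Inr i = y $ i"
  by (simp_all add: vpair_def)

lemma xpart_add: "xpart (u + v) = xpart u + xpart v"
  and xpart_scaleR: "xpart (r *\<^sub>R u) = r *\<^sub>R xpart u"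
  and xtilde_add: "xtilde (u + v) = xtilde u + xtilde v"
  and xtilde_scaleR: "xtilde (r *\<^sub>R u) = r *\<^sub>R xtilde u"
  by (simp_all add: xpart_def xtilde_def vec_eq_iff)

lemma xtilde_zero [simp]: "xtilde 0 = 0"
  by (simp add: xtilde_def vec_eq_iff)

lemma xpart_axis [simp]: "xpart (axis (Inl i) 1) = axis i 1" "xpart (axis (Inr i) 1) = 0"
  and xtilde_axis [simp]: "xtilde (axis (Inl i) 1) = 0" "xtilde (axis (Inr i) 1) = axis i 1"
  by (auto simp: xpart_def xtilde_def axis_def vec_eq_iff)

lemma linear_xpart: "linear xpart"
  and linear_xtilde: "linear xtilde"
  by (simp_all add: linearI xpart_add xpart_scaleR xtilde_add xtilde_scaleR)

lemma linear_vpair: "linear g \<Longrightarrow> linear h \<Longrightarrow> linear (\<lambda>v. vpair (g v) (h v))"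
  by (rule linearI) (simp_all add: linear_add linear_scale vpair_add vpair_scaleR)

lemma bounded_linear_xtilde: "bounded_linear xtilde"
  using linear_xtilde linear_conv_bounded_linear by blast

lemma open_vimage_xtilde: "open S \<Longrightarrow> open (xtilde -` S)"
  by (rule continuous_open_vimage) (auto intro: linear_continuous_at bounded_linear_xtilde)

lemma V_inner_eq: "V_inner u v = xpart u \<bullet> xtilde v + xtilde u \<bullet> xpart v"
  by (simp add: V_inner_def inner_vec_def xpart_def xtilde_def sum.distrib)

lemma bij_vpair_map:
  assumes "bij M" "bij N"
  shows "bij (\<lambda>z. vpair (M (xpart z)) (N (xtilde z)))"
proof (rule bijI)
  show "inj (\<lambda>z. vpair (M (xpart z)) (N (xtilde z)))"
  proof (rule injI)
    fix z1 z2
    assume "vpair (M (xpart z1)) (N (xtilde z1)) = vpair (M (xpart z2)) (N (xtilde z2))"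
    then have "xpart z1 = xpart z2" "xtilde z1 = xtilde z2"
      using assms by (auto simp: bij_def dest: injD)
    then show "z1 = z2"
      by (metis vpair_xpart_xtilde)
  qed
  show "surj (\<lambda>z. vpair (M (xpart z)) (N (xtilde z)))"
    by (rule surjI[where f = "\<lambda>y. vpair (inv M (xpart y)) (inv N (xtilde y))"])
      (use assms in \<open>simp add: bij_is_surj surj_f_inv_f vpair_xpart_xtilde\<close>)
qed

definition rank_two_op :: "real^'n::finite \<Rightarrow> real^'n \<Rightarrow> real^'n \<Rightarrow> real^'n \<Rightarrow> real^('n + 'n) \<Rightarrow> real^('n + 'n)"
  where "rank_two_op v1 v2 w1 w2 z = vpair ((w1 \<bullet> xtilde z) *\<^sub>R v1 + (w2 \<bullet> xtilde z) *\<^sub>R v2) 0"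

lemma linear_rank_two_op: "linear (rank_two_op v1 v2 w1 w2)"
  by (rule linearI)
    (simp_all add: rank_two_op_def xtilde_add xtilde_scaleR inner_add_right scaleR_add_left
      scaleR_add_right vpair_add vpair_scaleR)

lemma rank_two_op_similar:
  fixes v1 v2 w1 w2 v1' v2' w1' w2' :: "real^'n::finite"
  assumes "independent_pair v1 v2" "independent_pair w1 w2"
    and "independent_pair v1' v2'" "independent_pair w1' w2'"
  shows "same_jordan_form (rank_two_op v1 v2 w1 w2) (rank_two_op v1' v2' w1' w2')"
proof -
  obtain M where M: "linear M" "bij M" "M v1' = v1" "M v2' = v2"
    using linear_bij_map_independent_pair[OF assms(3,1)] by blast
  obtain K where K: "linear K" "bij K" "K w1 = w1'" "K w2 = w2'"
    using linear_bij_map_independent_pair[OF assms(2,4)] by blast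
  define T where "T z = vpair (M (xpart z)) (adjoint K (xtilde z))" for z
  have "linear T"
    unfolding T_def[abs_def]
    using M(1) adjoint_linear[OF K(1)] linear_xpart linear_xtilde
    by (intro linear_vpair) (auto intro: linear_compose[unfolded o_def])
  moreover have "bij T"
    unfolding T_def[abs_def] using M(2) K(1,2)
    by (intro bij_vpair_map) (simp_all add: bij_def)
  moreover have "rank_two_op v1 v2 w1 w2 \<circ> T = T \<circ> rank_two_op v1' v2' w1' w2'"
    using M K(3,4) adjoint_works[OF K(1)] adjoint_linear[OF K(1)]
    by (simp add: fun_eq_iff rank_two_op_def T_def linear_add linear_scale linear_0)
  ultimately show ?thesis
    unfolding same_jordan_form_def by blast
qed

lemma dim_range_rank_two_op:
  fixes v1 v2 w1 w2 :: "real^'n::finite"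
  assumes v: "independent_pair v1 v2" and w: "independent_pair w1 w2"
  shows "dim (range (rank_two_op v1 v2 w1 w2)) = 2"
proof -
  obtain z1 z2 where z: "w1 \<bullet> z1 = 1" "w2 \<bullet> z1 = 0" "w1 \<bullet> z2 = 0" "w2 \<bullet> z2 = 1"
    using independent_pair_dual[OF w] .
  define p1 where "p1 = vpair v1 0"
  define p2 where "p2 = vpair v2 0"
  have "range (rank_two_op v1 v2 w1 w2) = span {p1, p2}"
  proof
    have "rank_two_op v1 v2 w1 w2 z = (w1 \<bullet> xtilde z) *\<^sub>R p1 + (w2 \<bullet> xtilde z) *\<^sub>R p2" for z
      by (simp add: rank_two_op_def p1_def p2_def vpair_add vpair_scaleR)
    then show "range (rank_two_op v1 v2 w1 w2) \<subseteq> span {p1, p2}"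
      unfolding image_subset_iff by (simp add: span_add span_scale span_base)
    have "rank_two_op v1 v2 w1 w2 (vpair 0 z1) = p1" "rank_two_op v1 v2 w1 w2 (vpair 0 z2) = p2"
      using z by (simp_all add: rank_two_op_def p1_def p2_def)
    then have "p1 \<in> range (rank_two_op v1 v2 w1 w2)" "p2 \<in> range (rank_two_op v1 v2 w1 w2)"
      by (metis rangeI)+
    then show "span {p1, p2} \<subseteq> range (rank_two_op v1 v2 w1 w2)"
      by (intro span_minimal linear_subspace_image[OF linear_rank_two_op subspace_UNIV]) auto
  qed
  moreover have "independent_pair p1 p2"
    unfolding p1_def p2_def
    by (rule independent_pair_linear_image[OF linear_vpair[OF linear_id linear_zero, unfolded id_def] _ v])
      (simp add: inj_def)
  then have "independent {p1, p2}" "p1 \<noteq> p2"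
    using independent_pair_iff_independent independent_pair_neq by blast+
  ultimately show ?thesis
    by (simp add: dim_eq_card_independent)
qed

section \<open>The metric of a graph\<close>

definition graph_metric :: "real^'n::finite \<Rightarrow> real^('n + 'n) \<Rightarrow> real^('n + 'n) \<Rightarrow> real" where
  "graph_metric h u v = xpart u \<bullet> xtilde v + xtilde u \<bullet> xpart v + (h \<bullet> xtilde u) * (h \<bullet> xtilde v)"

lemma graph_metric_commute: "graph_metric h u v = graph_metric h v u"
  by (simp add: graph_metric_def inner_commute)

lemma bilinear_graph_metric: "bilinear (graph_metric h)"
  unfolding bilinear_def graph_metric_def
  by (auto intro!: linearI simp: xpart_add xpart_scaleR xtilde_add xtilde_scaleR algebra_simps)

lemma graph_metric_xtilde_eq_0: "xtilde v = 0 \<Longrightarrow> graph_metric h v v = 0"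
  by (simp add: graph_metric_def)

lemma graph_metric_vpair_diagonal:
  "graph_metric h (vpair (c *\<^sub>R w) w) (vpair (c *\<^sub>R w) w) = 2 * c * (w \<bullet> w) + (h \<bullet> w)\<^sup>2"
  by (simp add: graph_metric_def power2_eq_square inner_commute)

text \<open>The kernel of x~ is totally isotropic, so x~ is injective on every anisotropic subspace.\<close>

lemma dim_anisotropic_subspace_le:
  fixes h :: "real^'n::finite"
  assumes S: "subspace S" and aniso: "\<forall>v\<in>S. v \<noteq> 0 \<longrightarrow> graph_metric h v v \<noteq> 0"
  shows "dim S \<le> CARD('n)"
proof -
  have "inj_on xtilde (span S)"
  proof (rule inj_onI)
    fix u v
    assume "u \<in> span S" "v \<in> span S" "xtilde u = xtilde v"
    moreover have "span S = S"
      using S span_eq_iff by blast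
    ultimately have "u - v \<in> S" "xtilde (u - v) = 0"
      using S subspace_diff by (auto simp: linear_diff[OF linear_xtilde])
    then show "u = v"
      using aniso graph_metric_xtilde_eq_0 by fastforce
  qed
  then have "dim S = dim (xtilde ` S)"
    using dim_image_eq[OF linear_xtilde] by metis
  also have "\<dots> \<le> CARD('n)"
    by (rule dim_subset_UNIV_cart)
  finally show ?thesis .
qed

lemma Max_dim_graph_metric_definite:
  fixes h :: "real^'n::finite" and R :: "real \<Rightarrow> bool"
  assumes R0: "\<not> R 0"
    and R_graph: "\<And>w. w \<noteq> 0 \<Longrightarrow> R (graph_metric h (vpair (c *\<^sub>R w) w) (vpair (c *\<^sub>R w) w))"
  shows "Max {dim S | S. subspace S \<and> (\<forall>v\<in>S. v \<noteq> 0 \<longrightarrow> R (graph_metric h v v))} = CARD('n)"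
    (is "Max ?D = _")
proof (rule Max_eqI)
  show le: "d \<le> CARD('n)" if "d \<in> ?D" for d
  proof -
    obtain S where "d = dim S" "subspace S" "\<forall>v\<in>S. v \<noteq> 0 \<longrightarrow> R (graph_metric h v v)"
      using \<open>d \<in> ?D\<close> by blast
    moreover have "\<forall>v\<in>S. v \<noteq> 0 \<longrightarrow> graph_metric h v v \<noteq> 0"
      using calculation(3) R0 by metis
    ultimately show ?thesis
      using dim_anisotropic_subspace_le by blast
  qed
  then have "?D \<subseteq> {..CARD('n)}"
    by blast
  then show "finite ?D"
    using finite_subset by blast
  let ?graph = "\<lambda>w::real^'n. vpair (c *\<^sub>R w) w"
  have lin: "linear ?graph"
    by (intro linear_vpair linear_scale_self linear_id[unfolded id_def])
  have "dim (range ?graph) = dim (UNIV :: (real^'n) set)"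
    by (rule dim_image_eq[OF lin]) (simp add: inj_on_def)
  moreover have "subspace (range ?graph)"
    using linear_subspace_image[OF lin subspace_UNIV] .
  moreover have "\<forall>v\<in>range ?graph. v \<noteq> 0 \<longrightarrow> R (graph_metric h v v)"
    using R_graph by auto
  ultimately show "CARD('n) \<in> ?D"
    by (intro CollectI exI[of _ "range ?graph"]) simp
qed

lemma has_signature_graph_metric: "has_signature (graph_metric (h::real^'n::finite)) CARD('n) CARD('n)"
proof -
  have "neg_index (graph_metric h) = CARD('n)"
    unfolding neg_index_def
  proof (rule Max_dim_graph_metric_definite[where c = "- (h \<bullet> h + 1)"])
    fix w :: "real^'n"
    assume "w \<noteq> 0"
    then have ww: "0 < w \<bullet> w"
      by simp
    have "2 * - (h \<bullet> h + 1) * (w \<bullet> w) + (h \<bullet> w)\<^sup>2 \<le> - (h \<bullet> h + 2) * (w \<bullet> w)"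
      using Cauchy_Schwarz_ineq[of h w] by (simp add: algebra_simps)
    also have "\<dots> < 0"
      using ww inner_ge_zero[of h] by (intro mult_neg_pos) linarith+
    finally have "2 * - (h \<bullet> h + 1) * (w \<bullet> w) + (h \<bullet> w)\<^sup>2 < 0" .
    then show "graph_metric h (vpair (- (h \<bullet> h + 1) *\<^sub>R w) w) (vpair (- (h \<bullet> h + 1) *\<^sub>R w) w) < 0"
      by (simp only: graph_metric_vpair_diagonal)
  qed simp
  moreover have "pos_index (graph_metric h) = CARD('n)"
    unfolding pos_index_def
  proof (rule Max_dim_graph_metric_definite[where c = 1])
    fix w :: "real^'n"
    assume "w \<noteq> 0"
    then have "0 < 2 * 1 * (w \<bullet> w) + (h \<bullet> w)\<^sup>2"
      by (simp add: add_pos_nonneg)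
    then show "graph_metric h (vpair (1 *\<^sub>R w) w) (vpair (1 *\<^sub>R w) w) > 0"
      by (simp only: graph_metric_vpair_diagonal)
  qed simp
  ultimately show ?thesis
    by (simp add: has_signature_def)
qed

definition graph_metric_matrix :: "real^'n::finite \<Rightarrow> real^('n + 'n)^('n + 'n)" where
  "graph_metric_matrix h = (\<chi> a b.
     case a of
       Inl i \<Rightarrow> (case b of Inl j \<Rightarrow> 0 | Inr j \<Rightarrow> (if i = j then 1 else 0))
     | Inr i \<Rightarrow> (case b of Inl j \<Rightarrow> (if i = j then 1 else 0) | Inr j \<Rightarrow> h $ i * h $ j))"

definition graph_metric_matrix_inv :: "real^'n::finite \<Rightarrow> real^('n + 'n)^('n + 'n)" where
  "graph_metric_matrix_inv h = (\<chi> a b.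
     case a of
       Inl i \<Rightarrow> (case b of Inl j \<Rightarrow> - (h $ i * h $ j) | Inr j \<Rightarrow> (if i = j then 1 else 0))
     | Inr i \<Rightarrow> (case b of Inl j \<Rightarrow> (if i = j then 1 else 0) | Inr j \<Rightarrow> 0))"

lemma matrix_inv_graph_metric_matrix:
  "matrix_inv (graph_metric_matrix h) = graph_metric_matrix_inv h"
proof (rule matrix_inv_unique)
  show "graph_metric_matrix h ** graph_metric_matrix_inv h = mat 1"
    "graph_metric_matrix_inv h ** graph_metric_matrix h = mat 1"
    unfolding vec_eq_iff split_sum_all
    by (simp_all add: matrix_matrix_mult_def mat_def sum_UNIV_Plus if_one_zero_mult sum_negf
        graph_metric_matrix_def graph_metric_matrix_inv_def)
qed

section \<open>Levi-Civita connection and curvature of the graph\<close>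

definition christoffel_map :: "'i::finite metric \<Rightarrow> real^'i \<Rightarrow> real^'i \<Rightarrow> real^'i \<Rightarrow> real^'i" where
  "christoffel_map g P x y = (\<chi> k. \<Sum>i\<in>UNIV. \<Sum>j\<in>UNIV. christoffel g P k i j * x $ i * y $ j)"

lemma cov_deriv_const_field:
  "cov_deriv g (\<lambda>_. x) Y P = frechet_derivative Y (at P) x + christoffel_map g P x (Y P)"
  by (simp add: cov_deriv_def christoffel_map_def)

context smooth_function
begin

lemma induced_metric_eq_graph_metric:
  assumes Q: "xtilde Q \<in> S"
  shows "induced_metric f Q = graph_metric (gradient f (xtilde Q))"
proof -
  have "(xtilde has_derivative xtilde) (at Q)"
    using bounded_linear_xtilde bounded_linear_imp_has_derivative by blast
  from has_derivative_compose[OF this has_derivative_gradient_inner[OF Q]]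
  have "(graph_embedding f has_derivative (\<lambda>u. (u, gradient f (xtilde Q) \<bullet> xtilde u))) (at Q)"
    unfolding graph_embedding_def[abs_def] by (intro has_derivative_Pair has_derivative_ident)
  then have "frechet_derivative (graph_embedding f) (at Q) = (\<lambda>u. (u, gradient f (xtilde Q) \<bullet> xtilde u))"
    using frechet_derivative_at by metis
  then show ?thesis
    by (simp add: fun_eq_iff induced_metric_def W_inner_def V_inner_eq graph_metric_def)
qed

lemma has_derivative_gradient_xtilde:
  assumes Q: "xtilde Q \<in> S"
  shows "((\<lambda>Q. gradient f (xtilde Q)) has_derivative (\<lambda>u. hessian f (xtilde Q) *v xtilde u)) (at Q)"
proof -
  have "(xtilde has_derivative xtilde) (at Q)"
    using bounded_linear_xtilde bounded_linear_imp_has_derivative by blast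
  from has_derivative_compose[OF this has_derivative_gradient[OF Q]]
  show ?thesis .
qed

lemma has_derivative_induced_metric:
  assumes Q: "xtilde Q \<in> S"
  defines "h \<equiv> gradient f (xtilde Q)" and "H \<equiv> hessian f (xtilde Q)"
  shows "((\<lambda>Q. induced_metric f Q u v) has_derivative
    (\<lambda>w. ((H *v xtilde w) \<bullet> xtilde u) * (h \<bullet> xtilde v) + (h \<bullet> xtilde u) * ((H *v xtilde w) \<bullet> xtilde v))) (at Q)"
proof -
  let ?c = "xpart u \<bullet> xtilde v + xtilde u \<bullet> xpart v"
  have "((\<lambda>Q. ?c + (gradient f (xtilde Q) \<bullet> xtilde u) * (gradient f (xtilde Q) \<bullet> xtilde v)) has_derivative
    (\<lambda>w. ((H *v xtilde w) \<bullet> xtilde u) * (h \<bullet> xtilde v) + (h \<bullet> xtilde u) * ((H *v xtilde w) \<bullet> xtilde v))) (at Q)"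
    using has_derivative_gradient_xtilde[OF Q] unfolding h_def H_def
    by (auto intro!: derivative_eq_intros simp: algebra_simps)
  then show ?thesis
    by (rule has_derivative_transform_within_open[OF _ open_vimage_xtilde[OF open_domain]])
      (use Q in \<open>auto simp: induced_metric_eq_graph_metric graph_metric_def\<close>)
qed

lemma christoffel_induced_metric:
  assumes Q: "xtilde Q \<in> S"
  defines "h \<equiv> gradient f (xtilde Q)" and "H \<equiv> hessian f (xtilde Q)"
  shows "christoffel (induced_metric f) Q k a b =
     ((H *v xtilde (axis a 1)) \<bullet> xtilde (axis b 1)) * (vpair h 0 $ k)"
proof -
  let ?g = "induced_metric f"
  define A where "A = xtilde (axis a 1 :: real^('n + 'n))"
  define B where "B = xtilde (axis b 1 :: real^('n + 'n))"
  have "metric_matrix ?g Q $ c $ d = graph_metric_matrix h $ c $ d" for c d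
    by (cases c; cases d) (simp_all add: metric_matrix_def induced_metric_eq_graph_metric[OF Q]
        graph_metric_def graph_metric_matrix_def h_def gradient_def inner_axis axis_nth_if)
  then have "metric_matrix ?g Q = graph_metric_matrix h"
    by (simp add: vec_eq_iff)
  then have inv: "matrix_inv (metric_matrix ?g Q) = graph_metric_matrix_inv h"
    by (simp add: matrix_inv_graph_metric_matrix)
  have partial_g: "partial c (\<lambda>Q. ?g Q (axis d 1) (axis e 1)) Q =
      ((H *v xtilde (axis c 1)) \<bullet> xtilde (axis d 1)) * (h \<bullet> xtilde (axis e 1))
      + (h \<bullet> xtilde (axis d 1)) * ((H *v xtilde (axis c 1)) \<bullet> xtilde (axis e 1))" for c d e
    using partial_eq_derivative[OF has_derivative_induced_metric[OF Q]] unfolding h_def H_def .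
  have Koszul: "partial a (\<lambda>Q. ?g Q (axis b 1) (axis l 1)) Q + partial b (\<lambda>Q. ?g Q (axis a 1) (axis l 1)) Q
      - partial l (\<lambda>Q. ?g Q (axis a 1) (axis b 1)) Q = 2 * ((H *v A) \<bullet> B) * (h \<bullet> xtilde (axis l 1))" for l
    using hessian_symmetric[OF Q] unfolding partial_g A_def B_def H_def
    by (simp add: algebra_simps)
  have "christoffel ?g Q k a b =
      (1/2) * (\<Sum>l\<in>UNIV. graph_metric_matrix_inv h $ k $ l * (2 * ((H *v A) \<bullet> B) * (h \<bullet> xtilde (axis l 1))))"
    unfolding christoffel_def inv Koszul by simp
  also have "\<dots> = ((H *v A) \<bullet> B) * (\<Sum>l\<in>UNIV. graph_metric_matrix_inv h $ k $ l * (h \<bullet> xtilde (axis l 1)))"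
    by (simp add: sum_distrib_left mult_ac)
  also have "(\<Sum>l\<in>UNIV. graph_metric_matrix_inv h $ k $ l * (h \<bullet> xtilde (axis l 1))) = vpair h 0 $ k"
    by (cases k) (simp_all add: sum_UNIV_Plus graph_metric_matrix_inv_def inner_axis if_one_zero_mult)
  finally show ?thesis
    unfolding A_def B_def .
qed

lemma christoffel_map_induced_metric:
  assumes Q: "xtilde Q \<in> S"
  shows "christoffel_map (induced_metric f) Q y z =
    ((hessian f (xtilde Q) *v xtilde y) \<bullet> xtilde z) *\<^sub>R vpair (gradient f (xtilde Q)) 0"
proof -
  let ?H = "hessian f (xtilde Q)"
  have "(\<Sum>a\<in>UNIV. \<Sum>b\<in>UNIV. ((?H *v xtilde (axis a 1)) \<bullet> xtilde (axis b 1)) * y $ a * z $ b)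
      = (\<Sum>i\<in>UNIV. \<Sum>j\<in>UNIV. ?H $ j $ i * y $ Inr i * z $ Inr j)"
    by (simp add: sum_UNIV_Plus matrix_vector_mult_basis column_def inner_axis)
  also have "\<dots> = (\<Sum>j\<in>UNIV. \<Sum>i\<in>UNIV. ?H $ j $ i * y $ Inr i * z $ Inr j)"
    by (rule sum.swap)
  also have "\<dots> = (?H *v xtilde y) \<bullet> xtilde z"
    by (simp add: inner_vec_def matrix_vector_mult_def xtilde_def sum_distrib_right)
  finally have "(\<Sum>a\<in>UNIV. \<Sum>b\<in>UNIV. ((?H *v xtilde (axis a 1)) \<bullet> xtilde (axis b 1)) * y $ a * z $ b)
      = (?H *v xtilde y) \<bullet> xtilde z" .
  moreover have "christoffel_map (induced_metric f) Q y z $ k = (\<Sum>a\<in>UNIV. \<Sum>b\<in>UNIV.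
      ((?H *v xtilde (axis a 1)) \<bullet> xtilde (axis b 1)) * y $ a * z $ b) * (vpair (gradient f (xtilde Q)) 0 $ k)"
    for k
    by (simp add: christoffel_map_def christoffel_induced_metric[OF Q] sum_distrib_left mult_ac)
  ultimately show ?thesis
    by (simp add: vec_eq_iff)
qed

lemma has_derivative_christoffel_map:
  assumes P: "xtilde P \<in> S"
  defines "h \<equiv> gradient f (xtilde P)" and "H \<equiv> hessian f (xtilde P)"
  shows "((\<lambda>Q. christoffel_map (induced_metric f) Q y z) has_derivative
     (\<lambda>u. third_derivative f (xtilde P) (xtilde y) (xtilde z) (xtilde u) *\<^sub>R vpair h 0
        + ((H *v xtilde y) \<bullet> xtilde z) *\<^sub>R vpair (H *v xtilde u) 0)) (at P)"
proof -
  have "(xtilde has_derivative xtilde) (at P)"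
    using bounded_linear_xtilde bounded_linear_imp_has_derivative by blast
  from has_derivative_compose[OF this has_derivative_hessian_form[OF P]]
  have form: "((\<lambda>Q. (hessian f (xtilde Q) *v xtilde y) \<bullet> xtilde z) has_derivative
      (\<lambda>u. third_derivative f (xtilde P) (xtilde y) (xtilde z) (xtilde u))) (at P)" .
  have field: "((\<lambda>Q. vpair (gradient f (xtilde Q)) 0) has_derivative (\<lambda>u. vpair (H *v xtilde u) 0)) (at P)"
    using has_derivative_compose[OF has_derivative_gradient_xtilde[OF P]
        bounded_linear_imp_has_derivative[of "\<lambda>x. vpair x 0"]] linear_vpair[OF linear_id linear_zero]
    unfolding H_def by (simp add: linear_conv_bounded_linear id_def)
  have "((\<lambda>Q. ((hessian f (xtilde Q) *v xtilde y) \<bullet> xtilde z) *\<^sub>R vpair (gradient f (xtilde Q)) 0)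
      has_derivative (\<lambda>u. third_derivative f (xtilde P) (xtilde y) (xtilde z) (xtilde u) *\<^sub>R vpair h 0
        + ((H *v xtilde y) \<bullet> xtilde z) *\<^sub>R vpair (H *v xtilde u) 0)) (at P)"
    using has_derivative_scaleR[OF form field] unfolding h_def H_def by (simp add: add.commute)
  then show ?thesis
    by (rule has_derivative_transform_within_open[OF _ open_vimage_xtilde[OF open_domain]])
      (use P in \<open>auto simp: christoffel_map_induced_metric\<close>)
qed

lemma curvature_induced_metric:
  assumes P: "xtilde P \<in> S"
  defines "H \<equiv> hessian f (xtilde P)"
  shows "curvature (induced_metric f) P x y z =
    vpair (((H *v xtilde y) \<bullet> xtilde z) *\<^sub>R (H *v xtilde x) - ((H *v xtilde x) \<bullet> xtilde z) *\<^sub>R (H *v xtilde y)) 0"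
proof -
  let ?g = "induced_metric f" and ?h = "gradient f (xtilde P)"
  have "cov_deriv ?g (\<lambda>_. y) (\<lambda>_. z) = (\<lambda>Q. christoffel_map ?g Q y z)" for y z
    by (simp add: fun_eq_iff cov_deriv_const_field)
  moreover have "frechet_derivative (\<lambda>Q. christoffel_map ?g Q y z) (at P) x =
      third_derivative f (xtilde P) (xtilde y) (xtilde z) (xtilde x) *\<^sub>R vpair ?h 0
        + ((H *v xtilde y) \<bullet> xtilde z) *\<^sub>R vpair (H *v xtilde x) 0" for x y z
    using frechet_derivative_at[OF has_derivative_christoffel_map[OF P], symmetric] unfolding H_def by simp
  moreover have "christoffel_map ?g P x (vpair w 0) = 0" for x w
    by (simp add: christoffel_map_induced_metric[OF P])
  moreover have "lie_bracket (\<lambda>_. x) (\<lambda>_. y) = (\<lambda>_. 0)"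
    by (simp add: fun_eq_iff lie_bracket_def)
  ultimately show ?thesis
    unfolding curvature_def Let_def
    by (simp add: cov_deriv_const_field christoffel_map_induced_metric[OF P] vpair_scaleR vpair_add
        vpair_diff third_derivative_swap[OF P, of "xtilde y"] H_def)
qed

lemma nilpotent_curvature_induced_metric:
  assumes P: "xtilde P \<in> S"
  shows "nilpotent_curvature_at (induced_metric f) P"
  unfolding nilpotent_curvature_at_def
proof (intro allI exI[of _ 2] ext)
  fix x y z
  let ?R = "curvature (induced_metric f) P x y"
  have "xtilde (?R z) = 0"
    by (simp add: curvature_induced_metric[OF P])
  moreover have "?R w = 0" if "xtilde w = 0" for w
    using that by (simp add: curvature_induced_metric[OF P])
  ultimately show "(?R ^^ 2) z = 0"
    by (simp add: numeral_2_eq_2)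
qed

lemma continuous_on_det_hessian: "continuous_on S (\<lambda>q. det (hessian f q))"
  unfolding det_def hessian_def
  by (intro continuous_on_sum continuous_on_mult continuous_on_const continuous_on_prod)
    (simp add: continuous_on_partial2)

end

section \<open>Curvature operators of definite planes\<close>

lemma rank2_JIP_of_rank_two_ops:
  assumes "\<And>e1 e2. Pr e1 e2 \<Longrightarrow> \<exists>v1 v2 w1 w2. independent_pair v1 v2 \<and> independent_pair w1 w2
      \<and> A e1 e2 = rank_two_op v1 v2 w1 w2"
  shows "(\<forall>e1 e2. Pr e1 e2 \<longrightarrow> dim (range (A e1 e2)) = 2) \<and>
    (\<forall>e1 e2 f1 f2. Pr e1 e2 \<longrightarrow> Pr f1 f2 \<longrightarrow> same_jordan_form (A e1 e2) (A f1 f2))"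
  using assms dim_range_rank_two_op rank_two_op_similar by metis

context smooth_function
begin

lemma plane_curv_induced_metric_rank_two:
  assumes P: "xtilde P \<in> S" and det: "det (hessian f (xtilde P)) \<noteq> 0"
    and aniso: "anisotropic_pair (induced_metric f P) e1 e2"
  shows "\<exists>v1 v2 w1 w2. independent_pair v1 v2 \<and> independent_pair w1 w2 \<and>
    plane_curv (induced_metric f) P e1 e2 = rank_two_op v1 v2 w1 w2"
proof -
  define H where "H = hessian f (xtilde P)"
  define B where "B = graph_metric (gradient f (xtilde P))"
  have g: "induced_metric f P = B"
    unfolding B_def using induced_metric_eq_graph_metric[OF P] .
  have "independent_pair (xtilde e1) (xtilde e2)"
    unfolding independent_pair_def
  proof (intro allI impI)
    fix s t
    assume "s *\<^sub>R xtilde e1 + t *\<^sub>R xtilde e2 = 0"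
    then have "B (s *\<^sub>R e1 + t *\<^sub>R e2) (s *\<^sub>R e1 + t *\<^sub>R e2) = 0"
      unfolding B_def by (simp add: graph_metric_xtilde_eq_0 xtilde_add xtilde_scaleR)
    then show "s = 0 \<and> t = 0"
      using aniso unfolding g anisotropic_pair_def by blast
  qed
  moreover have "inj ((*v) H)"
    using det det_nz_iff_inj[OF matrix_vector_mul_linear[of H]]
    unfolding H_def matrix_of_matrix_vector_mul by blast
  ultimately have u: "independent_pair (H *v xtilde e1) (H *v xtilde e2)"
    using independent_pair_linear_image matrix_vector_mul_linear by blast
  define c where "c = 1 / sqrt \<bar>B e1 e1 * B e2 e2 - (B e1 e2)\<^sup>2\<bar>"
  have "B e1 e1 * B e2 e2 - (B e1 e2)\<^sup>2 > 0"
    using anisotropic_pair_gram_pos[OF _ _ aniso[unfolded g]] bilinear_graph_metric graph_metric_commute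
    unfolding B_def by blast
  then have "c \<noteq> 0"
    by (simp add: c_def)
  have "plane_curv (induced_metric f) P e1 e2 =
      rank_two_op (c *\<^sub>R (H *v xtilde e1)) (c *\<^sub>R (H *v xtilde e2)) (H *v xtilde e2) (- (H *v xtilde e1))"
    by (simp add: fun_eq_iff plane_curv_def g c_def[symmetric] curvature_induced_metric[OF P]
        rank_two_op_def H_def vpair_scaleR scaleR_diff_right mult.commute)
  then show ?thesis
    using independent_pair_scaleR[OF u \<open>c \<noteq> 0\<close>] independent_pair_uminus_right[OF independent_pair_commute[OF u]]
    by blast
qed

lemma spacelike_rank2_JIP_at_induced_metric:
  assumes "xtilde P \<in> S" and "det (hessian f (xtilde P)) \<noteq> 0"
  shows "spacelike_rank2_JIP_at (induced_metric f) P"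
  unfolding spacelike_rank2_JIP_at_def
  by (intro rank2_JIP_of_rank_two_ops plane_curv_induced_metric_rank_two[OF assms]
      anisotropic_pair_if_anisotropic_span) (auto simp: spacelike_pair_def)

lemma timelike_rank2_JIP_at_induced_metric:
  assumes "xtilde P \<in> S" and "det (hessian f (xtilde P)) \<noteq> 0"
  shows "timelike_rank2_JIP_at (induced_metric f) P"
  unfolding timelike_rank2_JIP_at_def
  by (intro rank2_JIP_of_rank_two_ops plane_curv_induced_metric_rank_two[OF assms]
      anisotropic_pair_if_anisotropic_span) (auto simp: timelike_pair_def)

end

theorem lemma5p2:
  fixes f :: "real^'n::finite \<Rightarrow> real" and S :: "(real^'n) set"
  assumes "open S" and "0 \<in> S" and "smooth_on S f"
    and "(f has_derivative (\<lambda>_. 0)) (at 0)"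
    and "det (\<chi> i j. partial i (partial j f) 0) \<noteq> 0"
  shows "\<exists>U :: (real^('n + 'n)) set. open U \<and> 0 \<in> U \<and>
     (\<forall>P\<in>U. has_signature (induced_metric f P) CARD('n) CARD('n)
        \<and> spacelike_rank2_JIP_at (induced_metric f) P
        \<and> timelike_rank2_JIP_at (induced_metric f) P
        \<and> nilpotent_curvature_at (induced_metric f) P)"
proof -
  interpret smooth_function f S
    using assms(1,3) by unfold_locales
  let ?U = "xtilde -` (S \<inter> (\<lambda>q. det (hessian f q)) -` (- {0}))"
  have "open (S \<inter> (\<lambda>q. det (hessian f q)) -` (- {0}))"
    using continuous_open_preimage[OF continuous_on_det_hessian assms(1)] by (simp add: open_Compl)
  then have "open ?U"
    by (rule open_vimage_xtilde)
  moreover have "0 \<in> ?U"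
    using assms(2,5) by (simp add: hessian_def)
  moreover have "has_signature (induced_metric f P) CARD('n) CARD('n)
        \<and> spacelike_rank2_JIP_at (induced_metric f) P
        \<and> timelike_rank2_JIP_at (induced_metric f) P
        \<and> nilpotent_curvature_at (induced_metric f) P" if "P \<in> ?U" for P
  proof -
    have P: "xtilde P \<in> S" and det: "det (hessian f (xtilde P)) \<noteq> 0"
      using that by auto
    then show ?thesis
      using has_signature_graph_metric spacelike_rank2_JIP_at_induced_metric timelike_rank2_JIP_at_induced_metric
        nilpotent_curvature_induced_metric by (simp add: induced_metric_eq_graph_metric[OF P])
  qed
  ultimately show ?thesis
    by blast
qed

end
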